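(* Let $f_0$ be an arithmetic function, let $m\ge1$ and $n\ge1$. Then $C_m(n)=C_1(n)\,L_n^{m-1}$; explicitly, for $1\le k\le n$, \[c_m(n,k)=\sum_{i=k}^n(m-1)^{i-k}\binom{i-1}{k-1}c_1(n,i).\]
   Context: An arithmetic function is a function $f_0:\{1,2,\ldots\}\to\mathbb{C}$. For $m\ge 1$, $f_m$ is the invert transform of $f_{m-1}$, i.e. $f_m(n)=f_{m-1}(n)+\sum_{i=1}^{n-1}f_{m-1}(i)f_m(n-i)$ for $n\ge1$. For $m\ge1$ the numbers $c_m(n,k)$, $0\le k\le n$, are defined by $c_m(0,0)=1$, $c_m(n,0)=0$ for $n\ge1$, and $c_m(n,k)=\sum_{i=1}^{n-k+1}f_{m-1}(i)\,c_m(n-i,k-1)$ for $1\le k\le n$. $C_m(n)$ is the $n\times n$ lower triangular matrix whose $(r,k)$ entry is $c_m(r,k)$ for $1\le k\le r\le n$ (and $0$ for $k>r$), and $L_n$ is the $n\times n$ lower triangular Pascal matrix whose $(r,k)$ entry is $\binom{r-1}{k-1}$; $L_n^0$ is the identity. The convention $0^0=1$ is used. *)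

theory Defs
  imports Complex_Main "Jordan_Normal_Form.Matrix"
begin

text \<open>Arithmetic functions are modelled as functions nat => complex; the value at 0 is ignored.\<close>

function invert :: "(nat \<Rightarrow> complex) \<Rightarrow> nat \<Rightarrow> complex" where
  "invert g n = g n + (\<Sum>i\<in>{1..<n}. g i * invert g (n - i))"
  by auto
termination
  by (relation "measure snd") auto

primrec fseq :: "(nat \<Rightarrow> complex) \<Rightarrow> nat \<Rightarrow> nat \<Rightarrow> complex" where
  "fseq f0 0 = f0"
| "fseq f0 (Suc m) = invert (fseq f0 m)"

primrec cc :: "(nat \<Rightarrow> complex) \<Rightarrow> nat \<Rightarrow> nat \<Rightarrow> complex" where
  "cc g n 0 = (if n = 0 then 1 else 0)"
| "cc g n (Suc k) = (if Suc k \<le> n then (\<Sum>i = 1..n - k. g i * cc g (n - i) k) else 0)"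

definition cm :: "(nat \<Rightarrow> complex) \<Rightarrow> nat \<Rightarrow> nat \<Rightarrow> nat \<Rightarrow> complex" where
  "cm f0 m n k = cc (fseq f0 (m - 1)) n k"

definition Cmat :: "(nat \<Rightarrow> complex) \<Rightarrow> nat \<Rightarrow> nat \<Rightarrow> complex mat" where
  "Cmat f0 m n = mat n n (\<lambda>(r, k). if k \<le> r then cm f0 m (r + 1) (k + 1) else 0)"

text \<open>Lower triangular Pascal matrix L_n, (r,k) entry binom(r-1,k-1) (1-based).\<close>
definition Lmat :: "nat \<Rightarrow> complex mat" where
  "Lmat n = mat n n (\<lambda>(r, k). of_nat (r choose k))"

end

theory Submission
  imports Defs "HOL-Computational_Algebra.Formal_Power_Series"
begin

text \<open>
  Attach to g the power series F(g) = sum over n >= 1 of g(n) x^n. Then c(n,k) is the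
  coefficient of x^n in F(g)^k, and the invert transform becomes F \<mapsto> F / (1 - F);
  iterating, F(f_p) = F / (1 - p F) with F = F(f_0). Hence
  F(f_p)^k = F^k (1 - p F)^(-k) = sum over i >= k of p^(i-k) C(i-1,k-1) F^i, which is the
  explicit formula after taking the coefficient of x^n. The matrix identity is the same
  formula read entrywise, since the (i,k) entry of L^p is p^(i-k) C(i,k).
\<close>

declare invert.simps[simp del]

definition arith_fps :: "(nat \<Rightarrow> 'a::zero) \<Rightarrow> 'a fps" where
  "arith_fps g = Abs_fps (\<lambda>n. if n = 0 then 0 else g n)"

lemma arith_fps_nth_0 [simp]: "fps_nth (arith_fps g) 0 = 0"
  by (simp add: arith_fps_def)

lemma cc_eq_0: "n < k \<Longrightarrow> cc g n k = 0"
  by (cases k) auto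

lemma cc_eq_fps_nth_power: "cc g n k = fps_nth (arith_fps g ^ k) n"
proof (induction k arbitrary: n)
  case 0
  then show ?case by simp
next
  case (Suc k)
  have "fps_nth (arith_fps g ^ Suc k) n = (\<Sum>i = 0..n. fps_nth (arith_fps g) i * cc g (n - i) k)"
    by (simp add: fps_mult_nth Suc.IH)
  also have "\<dots> = (\<Sum>i = 1..n. g i * cc g (n - i) k)"
    by (simp add: arith_fps_def sum.atLeast_Suc_atMost)
  also have "\<dots> = cc g n (Suc k)"
  proof (cases "Suc k \<le> n")
    case True
    have "(\<Sum>i = 1..n. g i * cc g (n - i) k) = (\<Sum>i = 1..n - k. g i * cc g (n - i) k)"
      by (rule sum.mono_neutral_right) (auto simp: cc_eq_0)
    then show ?thesis using True by simp
  next
    case False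
    then show ?thesis by (auto intro!: sum.neutral simp: cc_eq_0)
  qed
  finally show ?case by simp
qed

lemma arith_fps_invert: "arith_fps (invert g) * (1 - arith_fps g) = arith_fps g"
proof (rule fps_ext)
  fix n
  show "fps_nth (arith_fps (invert g) * (1 - arith_fps g)) n = fps_nth (arith_fps g) n"
  proof (cases n)
    case 0
    then show ?thesis by simp
  next
    case (Suc n')
    have "fps_nth (arith_fps (invert g) * arith_fps g) n
        = (\<Sum>i = 0..n. fps_nth (arith_fps (invert g)) i * fps_nth (arith_fps g) (n - i))"
      by (simp add: fps_mult_nth)
    also have "\<dots> = (\<Sum>i = 0..n. fps_nth (arith_fps (invert g)) (n - i) * fps_nth (arith_fps g) i)"
      by (rule sum.reindex_bij_witness[of _ "\<lambda>i. n - i" "\<lambda>i. n - i"]) auto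
    also have "\<dots> = (\<Sum>i\<in>{1..<n}. g i * invert g (n - i))"
      using Suc by (auto simp: arith_fps_def sum.atLeast_Suc_atMost mult.commute
          atLeastLessThanSuc_atLeastAtMost[symmetric] sum.atLeast_Suc_lessThan)
    finally show ?thesis
      using Suc invert.simps[of g n] by (simp add: algebra_simps arith_fps_def)
  qed
qed

lemma arith_fps_fseq:
  "arith_fps (fseq f0 p) * (1 - fps_const (of_nat p) * arith_fps f0) = arith_fps f0"
proof (induction p)
  case 0
  then show ?case by simp
next
  case (Suc p)
  define F where "F = arith_fps f0"
  define G where "G = arith_fps (fseq f0 p)"
  define A where "A = 1 - fps_const (of_nat p) * F"
  have IH: "G * A = F"
    using Suc.IH by (simp add: G_def A_def F_def)
  have "arith_fps (fseq f0 (Suc p)) * (1 - G) = G"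
    by (simp add: G_def arith_fps_invert)
  then have "arith_fps (fseq f0 (Suc p)) * (A - G * A) = F"
    using IH by (metis mult.assoc left_diff_distrib mult_1)
  moreover have "A - G * A = 1 - fps_const (of_nat (Suc p)) * F"
    unfolding IH by (simp add: A_def algebra_simps fps_const_add[symmetric])
  ultimately show ?case by (simp add: F_def)
qed

definition neg_binomial_fps :: "nat \<Rightarrow> 'a::comm_ring_1 \<Rightarrow> 'a fps" where
  "neg_binomial_fps k c = Abs_fps (\<lambda>j. of_nat ((k + j - 1) choose j) * c ^ j)"

lemma neg_binomial_fps_0: "neg_binomial_fps 0 c = 1"
  by (rule fps_ext) (auto simp: neg_binomial_fps_def binomial_eq_0)

lemma neg_binomial_fps_Suc_mult:
  "neg_binomial_fps (Suc k) c * (1 - fps_const c * fps_X) = neg_binomial_fps k c"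
proof (rule fps_ext)
  fix j
  have expand: "neg_binomial_fps (Suc k) c * (1 - fps_const c * fps_X)
      = neg_binomial_fps (Suc k) c - fps_const c * (fps_X * neg_binomial_fps (Suc k) c)"
    by (simp add: algebra_simps)
  show "fps_nth (neg_binomial_fps (Suc k) c * (1 - fps_const c * fps_X)) j = fps_nth (neg_binomial_fps k c) j"
  proof (cases j)
    case 0
    then show ?thesis by (simp add: expand neg_binomial_fps_def)
  next
    case (Suc j')
    have "Suc (k + j') choose Suc j' = (k + j' choose j') + (k + j' choose Suc j')"
      by simp
    then show ?thesis
      using Suc by (simp add: expand neg_binomial_fps_def algebra_simps)
  qed
qed

lemma neg_binomial_fps_mult_power:
  "neg_binomial_fps k c * (1 - fps_const c * fps_X) ^ k = 1"
proof (induction k)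
  case 0
  then show ?case by (simp add: neg_binomial_fps_0)
next
  case (Suc k)
  have "neg_binomial_fps (Suc k) c * (1 - fps_const c * fps_X) ^ Suc k
      = (neg_binomial_fps (Suc k) c * (1 - fps_const c * fps_X)) * (1 - fps_const c * fps_X) ^ k"
    by (simp add: algebra_simps)
  then show ?case
    using Suc.IH by (simp add: neg_binomial_fps_Suc_mult)
qed

lemma fps_power_eq_neg_binomial_compose:
  fixes F G :: "'a::idom fps"
  assumes F0: "fps_nth F 0 = 0" and G: "G * (1 - fps_const c * F) = F"
  shows "G ^ k = (fps_X ^ k * neg_binomial_fps k c) oo F"
proof -
  have "fps_X ^ k * neg_binomial_fps k c * (1 - fps_const c * fps_X) ^ k = fps_X ^ k"
    by (metis neg_binomial_fps_mult_power mult.assoc mult_1_right)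
  then have "(fps_X ^ k * neg_binomial_fps k c * (1 - fps_const c * fps_X) ^ k) oo F = fps_X ^ k oo F"
    by (rule arg_cong)
  then have "((fps_X ^ k * neg_binomial_fps k c) oo F) * (1 - fps_const c * F) ^ k = F ^ k"
    using F0 by (simp add: fps_compose_mult_distrib fps_compose_power[symmetric] fps_X_power_compose
        fps_compose_sub_distrib fps_const_mult_apply_left[symmetric])
  also have "F ^ k = G ^ k * (1 - fps_const c * F) ^ k"
    using G by (metis power_mult_distrib)
  moreover have "fps_const c * F \<noteq> 1"
  proof
    assume "fps_const c * F = 1"
    then have "fps_nth (fps_const c * F) 0 = 1" by simp
    with F0 show False by simp
  qed
  ultimately show ?thesis
    by simp
qed

lemma cc_fseq_eq_sum:
  assumes "1 \<le> k"
  shows "cc (fseq f0 p) n k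
    = (\<Sum>i = k..n. of_nat p ^ (i - k) * of_nat ((i - 1) choose (k - 1)) * cc f0 n i)"
proof -
  define E where "E = fps_X ^ k * neg_binomial_fps k (of_nat p :: complex)"
  have powers: "arith_fps (fseq f0 p) ^ k = E oo arith_fps f0"
    unfolding E_def by (rule fps_power_eq_neg_binomial_compose) (simp_all add: arith_fps_fseq)
  have E_nth: "fps_nth E i = of_nat p ^ (i - k) * of_nat ((i - 1) choose (k - 1))" if "k \<le> i" for i
  proof -
    have "(i - 1 choose (i - k)) = (i - 1 choose (k - 1))"
      using that assms binomial_symmetric[of "i - k" "i - 1"] by (simp add: Suc_diff_le)
    then show ?thesis
      using that assms by (simp add: E_def fps_X_power_mult_nth neg_binomial_fps_def)
  qed
  have "cc (fseq f0 p) n k = (\<Sum>i = 0..n. fps_nth E i * fps_nth (arith_fps f0 ^ i) n)"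
    by (simp add: cc_eq_fps_nth_power powers fps_compose_nth)
  also have "\<dots> = (\<Sum>i = k..n. fps_nth E i * fps_nth (arith_fps f0 ^ i) n)"
    by (rule sum.mono_neutral_right) (auto simp: E_def fps_X_power_mult_nth)
  also have "\<dots> = (\<Sum>i = k..n. of_nat p ^ (i - k) * of_nat ((i - 1) choose (k - 1)) * cc f0 n i)"
    by (rule sum.cong) (simp_all add: E_nth cc_eq_fps_nth_power)
  finally show ?thesis .
qed

lemma sum_pascal_power_binomial:
  fixes p :: nat
  assumes "i < n"
  shows "(\<Sum>j<n. (of_nat p :: 'a::comm_semiring_1) ^ (i - j) * of_nat (i choose j) * of_nat (j choose k))
     = of_nat (Suc p) ^ (i - k) * of_nat (i choose k)"
proof -
  have "(\<Sum>j<n. (of_nat p :: 'a) ^ (i - j) * of_nat (i choose j) * of_nat (j choose k))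
      = (\<Sum>j<n. (of_nat p :: 'a) ^ (i - j) * of_nat ((i choose j) * (j choose k)))"
    by (simp add: mult.assoc)
  also have "\<dots> = (\<Sum>j = k..i. (of_nat p :: 'a) ^ (i - j) * of_nat ((i choose j) * (j choose k)))"
  proof (rule sum.mono_neutral_right)
    show "\<forall>j \<in> {..<n} - {k..i}. (of_nat p :: 'a) ^ (i - j) * of_nat ((i choose j) * (j choose k)) = 0"
      by (auto simp: binomial_eq_0 not_le)
  qed (use assms in auto)
  also have "\<dots> = (\<Sum>j = k..i. (of_nat p :: 'a) ^ (i - j) * of_nat ((i choose k) * ((i - k) choose (j - k))))"
    by (intro sum.cong refl) (simp add: choose_mult)
  also have "\<dots> = of_nat (i choose k) * (\<Sum>j = k..i. of_nat ((i - k) choose (j - k)) * (of_nat p :: 'a) ^ (i - j))"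
    by (simp add: sum_distrib_left mult_ac)
  also have "(\<Sum>j = k..i. of_nat ((i - k) choose (j - k)) * (of_nat p :: 'a) ^ (i - j))
      = (\<Sum>t\<le>i - k. of_nat ((i - k) choose t) * 1 ^ t * (of_nat p :: 'a) ^ (i - k - t))"
    if "k \<le> i"
    using that by (intro sum.reindex_bij_witness[of _ "\<lambda>t. t + k" "\<lambda>j. j - k"]) auto
  then have "of_nat (i choose k) * (\<Sum>j = k..i. of_nat ((i - k) choose (j - k)) * (of_nat p :: 'a) ^ (i - j))
      = of_nat (i choose k) * (1 + of_nat p) ^ (i - k)"
    by (cases "k \<le> i") (simp_all add: binomial_ring binomial_eq_0)
  finally show ?thesis by (simp add: mult.commute)
qed

lemma dim_Lmat [simp]: "dim_row (Lmat n) = n" "dim_col (Lmat n) = n"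
  by (simp_all add: Lmat_def)

lemma Lmat_index: "j < n \<Longrightarrow> k < n \<Longrightarrow> Lmat n $$ (j, k) = of_nat (j choose k)"
  by (simp add: Lmat_def)

lemma Lmat_power_index:
  assumes "i < n" and "k < n"
  shows "(Lmat n ^\<^sub>m p) $$ (i, k) = of_nat p ^ (i - k) * of_nat (i choose k)"
  using assms
proof (induction p arbitrary: i k)
  case 0
  then show ?case by (auto simp: Lmat_def binomial_eq_0)
next
  case (Suc p)
  have "(Lmat n ^\<^sub>m Suc p) $$ (i, k) = (\<Sum>j<n. (Lmat n ^\<^sub>m p) $$ (i, j) * Lmat n $$ (j, k))"
    using Suc.prems by (simp add: scalar_prod_def lessThan_atLeast0)
  also have "\<dots> = (\<Sum>j<n. (of_nat p :: complex) ^ (i - j) * of_nat (i choose j) * of_nat (j choose k))"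
    using Suc.prems by (intro sum.cong) (auto simp: Suc.IH Lmat_index)
  also have "\<dots> = of_nat (Suc p) ^ (i - k) * of_nat (i choose k)"
    using Suc.prems(1) by (rule sum_pascal_power_binomial)
  finally show ?case .
qed

lemma cm_eq_sum_cm_1:
  assumes "1 \<le> k"
  shows "cm f0 m n k
    = (\<Sum>i = k..n. of_nat (m - 1) ^ (i - k) * of_nat ((i - 1) choose (k - 1)) * cm f0 1 n i)"
  using cc_fseq_eq_sum[OF assms] by (simp add: cm_def)

lemma Cmat_index:
  "r < n \<Longrightarrow> k < n \<Longrightarrow> Cmat f0 m n $$ (r, k) = (if k \<le> r then cm f0 m (r + 1) (k + 1) else 0)"
  by (simp add: Cmat_def)

lemma Cmat_eq_Cmat_1_mult_Lmat_power:
  "Cmat f0 m n = Cmat f0 1 n * Lmat n ^\<^sub>m (m - 1)"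
proof (rule eq_matI)
  fix r k
  assume "r < dim_row (Cmat f0 1 n * Lmat n ^\<^sub>m (m - 1))"
    and "k < dim_col (Cmat f0 1 n * Lmat n ^\<^sub>m (m - 1))"
  then have r: "r < n" and k: "k < n"
    by (simp_all add: Cmat_def split: if_splits)
  define p where "p = m - 1"
  have "(Cmat f0 1 n * Lmat n ^\<^sub>m p) $$ (r, k)
      = (\<Sum>i<n. Cmat f0 1 n $$ (r, i) * (Lmat n ^\<^sub>m p) $$ (i, k))"
    using r k by (simp add: Cmat_def scalar_prod_def lessThan_atLeast0)
  also have "\<dots> = (\<Sum>i = k..r. of_nat p ^ (i - k) * of_nat (i choose k) * cm f0 1 (r + 1) (i + 1))"
    using r k by (intro sum.mono_neutral_cong_right)
      (auto simp: Cmat_index Lmat_power_index binomial_eq_0)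
  also have "\<dots> = (\<Sum>i = k + 1..r + 1. of_nat p ^ (i - (k + 1)) * of_nat ((i - 1) choose (k + 1 - 1)) * cm f0 1 (r + 1) i)"
    by (intro sum.reindex_bij_witness[of _ "\<lambda>i. i - 1" "\<lambda>i. i + 1"]) auto
  also have "\<dots> = cm f0 m (r + 1) (k + 1)"
    unfolding p_def by (rule cm_eq_sum_cm_1[symmetric]) simp
  also have "\<dots> = Cmat f0 m n $$ (r, k)"
    using r k by (simp add: Cmat_index cm_def cc_eq_0)
  finally show "Cmat f0 m n $$ (r, k) = (Cmat f0 1 n * Lmat n ^\<^sub>m (m - 1)) $$ (r, k)"
    by (simp add: p_def)
qed (simp_all add: Cmat_def)

theorem proposition9:
  fixes f0 :: "nat \<Rightarrow> complex" and m n :: nat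
  assumes "m \<ge> 1" and "n \<ge> 1"
  shows "Cmat f0 m n = Cmat f0 1 n * (Lmat n ^\<^sub>m (m - 1))
    \<and> (\<forall>k. 1 \<le> k \<and> k \<le> n \<longrightarrow>
          cm f0 m n k = (\<Sum>i = k..n. of_nat (m - 1) ^ (i - k) * of_nat ((i - 1) choose (k - 1)) * cm f0 1 n i))"
  using Cmat_eq_Cmat_1_mult_Lmat_power cm_eq_sum_cm_1 by blast

end
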